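(* The morphism of algebraic patterns $\Xi^{\mathrm{op}}\colon\Theta^{\mathrm{op}}\to\Theta^{\mathrm{op}}$ is a strong Segal morphism: for every $T\in\Theta$ the induced functor $\Theta^{\mathrm{el}}_{/T}\to\Theta^{\mathrm{el}}_{/\Xi T}$ is final.
   Context: $\Theta$ is Joyal's cell category (strict $\omega$-categories free on globular sums); inert morphisms are those free on morphisms of $\omega$-graphs between globular sums, elementary objects are the globes $\mathbf D_n$, and $\Theta^{\mathrm{el}}_{/T}$ denotes the category of inert morphisms $E\to T$ in $\Theta$ with $E$ elementary. $\Xi$ is the suspension, with $\Xi\mathbf D_n=\mathbf D_{n+1}$. Every $T\in\Theta$ has a unique globular presentation $T\simeq\mathbf D_{n_1}\amalg_{\mathbf D_{m_1}}\cdots\amalg_{\mathbf D_{m_{p-1}}}\mathbf D_{n_p}$ with $m_i<n_i,n_{i+1}$, and the corresponding zigzag diagram is final in $\Theta^{\mathrm{el}}_{/T}$. *)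

theory Defs
  imports "HOL-Analysis.Analysis"
begin

text \<open>A cell of the globe D_n is (k, b): for k < n there are two k-cells, the
  iterated source (Src) and the iterated target (Tgt); the unique n-cell is (n, Top).\<close>

datatype gkind = Src | Tgt | Top

definition globe_cell :: "nat \<Rightarrow> nat \<times> gkind \<Rightarrow> bool" where
  "globe_cell n c \<longleftrightarrow> (fst c < n \<and> snd c \<noteq> Top) \<or> (fst c = n \<and> snd c = Top)"

text \<open>A globular sum is given by its globular presentation
  D_{n_1} \<amalg>_{D_{m_1}} ... \<amalg>_{D_{m_{p-1}}} D_{n_p}, encoded by the lists
  ns = [n_1,...,n_p] and ms = [m_1,...,m_{p-1}] with m_i < n_i, n_{i+1}.\<close>

definition glob_pres :: "nat list \<Rightarrow> nat list \<Rightarrow> bool" where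
  "glob_pres ns ms \<longleftrightarrow> ns \<noteq> [] \<and> length ns = Suc (length ms) \<and>
     (\<forall>i < length ms. ms ! i < ns ! i \<and> ms ! i < ns ! Suc i)"

type_synonym rawcell = "nat \<times> nat \<times> gkind"

text \<open>Cells of the disjoint union of the globes (i = index of the globe).\<close>

definition raw_cells :: "nat list \<Rightarrow> rawcell set" where
  "raw_cells ns = {(i, k, b). i < length ns \<and> globe_cell (ns ! i) (k, b)}"

text \<open>Gluing: the target copy of D_{m_i} in the i-th globe is identified with the
  source copy of D_{m_i} in the (i+1)-st globe.\<close>

definition glue :: "nat list \<Rightarrow> (rawcell \<times> rawcell) set" where
  "glue ms = {((i, k, b), (Suc i, k, b)) | i k b. i < length ms \<and> k < ms ! i \<and> b \<noteq> Top}
           \<union> {((i, ms ! i, Tgt), (Suc i, ms ! i, Src)) | i. i < length ms}"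

text \<open>The equivalence relation whose quotient is the colimit (computed levelwise).\<close>

definition cell_equiv :: "nat list \<Rightarrow> nat list \<Rightarrow> (rawcell \<times> rawcell) set" where
  "cell_equiv ns ms = (glue ms \<union> (glue ms)\<inverse>)\<^sup>* \<inter> (raw_cells ns \<times> raw_cells ns)"

definition gcells :: "nat list \<Rightarrow> nat list \<Rightarrow> rawcell set set" where
  "gcells ns ms = raw_cells ns // cell_equiv ns ms"

text \<open>This is the (poset) category
  Theta^el_{/T}: objects are the inert maps D_k \<rightarrow> T, i.e. k-cells of T, and a
  morphism is an inert D_k \<rightarrow> D_l over T (at most one, T being a pasting diagram).\<close>

definition face_step :: "nat list \<Rightarrow> nat list \<Rightarrow> (rawcell set \<times> rawcell set) set" where
  "face_step ns ms = {(X, Y). X \<in> gcells ns ms \<and> Y \<in> gcells ns ms \<and>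
      (\<exists>i k b k' b'. (i, k, b) \<in> X \<and> (i, k', b') \<in> Y \<and> k < k')}"

definition el_le :: "nat list \<Rightarrow> nat list \<Rightarrow> rawcell set \<Rightarrow> rawcell set \<Rightarrow> bool" where
  "el_le ns ms X Y \<longleftrightarrow> X \<in> gcells ns ms \<and> Y \<in> gcells ns ms \<and> (X, Y) \<in> (face_step ns ms)\<^sup>*"

text \<open>Xi D_n = D_{n+1} and Xi preserves globular sums, so Xi T has presentation
  with all n_i, m_i shifted by one. On cells, Xi sends a k-cell to a (k+1)-cell.\<close>

definition susp_pres :: "nat list \<Rightarrow> nat list" where
  "susp_pres xs = map Suc xs"

definition susp_raw :: "rawcell \<Rightarrow> rawcell" where
  "susp_raw c = (case c of (i, k, b) \<Rightarrow> (i, Suc k, b))"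

definition susp_el :: "nat list \<Rightarrow> nat list \<Rightarrow> rawcell set \<Rightarrow> rawcell set" where
  "susp_el ns ms X = cell_equiv (susp_pres ns) (susp_pres ms) `` (susp_raw ` X)"

text \<open>Classifying space of a finite poset P: geometric realization of its nerve,
  i.e. of its order complex, realized inside R^P.\<close>

definition poset_realization :: "'a set \<Rightarrow> ('a \<Rightarrow> 'a \<Rightarrow> bool) \<Rightarrow> ('a \<Rightarrow> real) topology" where
  "poset_realization P le = subtopology (powertop_real P)
     {f \<in> topspace (powertop_real P). (\<forall>x\<in>P. 0 \<le> f x) \<and> sum f P = 1 \<and>
        (\<forall>x\<in>P. \<forall>y\<in>P. f x \<noteq> 0 \<longrightarrow> f y \<noteq> 0 \<longrightarrow> le x y \<or> le y x)}"

definition weakly_contractible_poset :: "'a set \<Rightarrow> ('a \<Rightarrow> 'a \<Rightarrow> bool) \<Rightarrow> bool" where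
  "weakly_contractible_poset P le \<longleftrightarrow>
     finite P \<and> P \<noteq> {} \<and> contractible_space (poset_realization P le)"

text \<open>A functor F : P \<rightarrow> Q of finite posets is final iff for every y in Q the comma
  category y/F = {x. y \<le> F x} is weakly contractible.\<close>

definition final_poset_functor ::
  "'a set \<Rightarrow> ('a \<Rightarrow> 'a \<Rightarrow> bool) \<Rightarrow> 'b set \<Rightarrow> ('b \<Rightarrow> 'b \<Rightarrow> bool) \<Rightarrow> ('a \<Rightarrow> 'b) \<Rightarrow> bool" where
  "final_poset_functor P leP Q leQ F \<longleftrightarrow>
     (\<forall>y\<in>Q. weakly_contractible_poset {x \<in> P. leQ y (F x)} leP)"

end

theory Submission
  imports Defs
begin

text \<open>If \<open>y\<close> is one of the two vertices of \<open>\<Xi> T\<close>, every suspended cell lies above it, so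
  the comma poset \<open>y/\<Xi>\<close> is the whole poset of cells of \<open>T\<close>. That poset is dismantlable:
  adding the globes of the presentation one at a time, the top cell of the new globe is
  dominated by the cell \<open>D_{m_j}\<close> along which it is glued, and every other new cell by
  that top cell; removing a dominated point \<open>p\<close> is a deformation retraction of the order
  complex (shift the weight of \<open>p\<close> onto a dominating point). If \<open>y\<close> has positive dimension,
  it is the suspension of a cell \<open>x\<close>, and since suspension reflects the face order,
  \<open>y/\<Xi>\<close> has least element \<open>x\<close>.\<close>

section \<open>Dismantlable posets are weakly contractible\<close>

definition comparable :: "('a \<Rightarrow> 'a \<Rightarrow> bool) \<Rightarrow> 'a \<Rightarrow> 'a \<Rightarrow> bool" where
  "comparable le x y \<longleftrightarrow> le x y \<or> le y x"

definition chain_weights :: "'a set \<Rightarrow> ('a \<Rightarrow> 'a \<Rightarrow> bool) \<Rightarrow> 'a set \<Rightarrow> ('a \<Rightarrow> real) set" where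
  "chain_weights P le S = {f \<in> topspace (powertop_real P). (\<forall>x\<in>P. 0 \<le> f x) \<and> sum f P = 1 \<and>
     (\<forall>x\<in>P. \<forall>y\<in>P. f x \<noteq> 0 \<longrightarrow> f y \<noteq> 0 \<longrightarrow> comparable le x y) \<and> (\<forall>x\<in>P - S. f x = 0)}"

lemma poset_realization_eq_chain_weights:
  "poset_realization P le = subtopology (powertop_real P) (chain_weights P le P)"
  by (simp add: poset_realization_def chain_weights_def comparable_def)

lemma chain_weights_insert:
  assumes "p \<in> P" "p \<notin> S"
  shows "chain_weights P le S = {f \<in> chain_weights P le (insert p S). f p = 0}"
  using assms by (auto simp: chain_weights_def)

lemma chain_weights_mono: "S \<subseteq> S' \<Longrightarrow> chain_weights P le S \<subseteq> chain_weights P le S'"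
  by (auto simp: chain_weights_def)

lemma chain_weights_singleton:
  assumes "finite P" "m \<in> P"
  shows "chain_weights P le {m} \<subseteq> {restrict (\<lambda>x. if x = m then 1 else 0) P}"
proof
  fix f assume f: "f \<in> chain_weights P le {m}"
  then have "f m = sum f P" using assms by (simp add: chain_weights_def sum.remove)
  with f show "f \<in> {restrict (\<lambda>x. if x = m then 1 else 0) P}"
    by (auto simp: chain_weights_def fun_eq_iff PiE_def extensional_def)
qed

definition shift_weight :: "'a \<Rightarrow> 'a \<Rightarrow> real \<times> ('a \<Rightarrow> real) \<Rightarrow> ('a \<Rightarrow> real)" where
  "shift_weight p q =
     (\<lambda>(t, f) x. if x = p then (1 - t) * f p else if x = q then f q + t * f p else f x)"

lemma shift_weight_0 [simp]: "shift_weight p q (0, f) = f"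
  by (auto simp: shift_weight_def)

lemma shift_weight_1_fixed: "f p = 0 \<Longrightarrow> shift_weight p q (1, f) = f"
  by (auto simp: shift_weight_def)

lemma continuous_map_shift_weight:
  assumes "p \<in> P" "q \<in> P"
  shows "continuous_map (prod_topology (top_of_set {0..1}) (subtopology (powertop_real P) A))
           (powertop_real P) (shift_weight p q)"
proof -
  let ?X = "prod_topology (top_of_set {0..1}) (subtopology (powertop_real P) A)"
  have coord: "continuous_map ?X euclideanreal (\<lambda>z. snd z x)" if "x \<in> P" for x
    by (rule continuous_map_compose[OF continuous_map_snd, unfolded o_def])
       (intro continuous_intros that)
  have time: "continuous_map ?X euclideanreal fst"
    using continuous_map_fst continuous_map_in_subtopology by blast
  show ?thesis
    unfolding continuous_map_componentwise
  proof (intro conjI ballI)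
    show "shift_weight p q ` topspace ?X \<subseteq> extensional P"
      using assms by (auto simp: shift_weight_def extensional_def PiE_def)
    fix x assume "x \<in> P"
    then show "continuous_map ?X euclideanreal (\<lambda>z. shift_weight p q z x)"
      using coord assms time
      by (auto simp: shift_weight_def case_prod_unfold intro!: continuous_intros)
  qed
qed

definition dominates :: "('a \<Rightarrow> 'a \<Rightarrow> bool) \<Rightarrow> 'a set \<Rightarrow> 'a \<Rightarrow> 'a \<Rightarrow> bool" where
  "dominates le S q p \<longleftrightarrow> (\<forall>x\<in>S. comparable le x p \<longrightarrow> comparable le x q)"

lemma dominates_mono: "dominates le S' q p \<Longrightarrow> S \<subseteq> S' \<Longrightarrow> dominates le S q p"
  by (auto simp: dominates_def)

lemma shift_weight_in_chain_weights:
  assumes P: "finite P" and refl: "\<forall>x\<in>P. le x x" and S: "S \<subseteq> P"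
    and pq: "p \<in> S" "q \<in> S" "p \<noteq> q" and dom: "dominates le S q p"
    and f: "f \<in> chain_weights P le S" and t: "t \<in> {0..1}"
  shows "shift_weight p q (t, f) \<in> chain_weights P le S"
proof -
  let ?g = "shift_weight p q (t, f)"
  have pqP: "p \<in> P" "q \<in> P" using pq S by auto
  have ftop: "f \<in> topspace (powertop_real P)" and fnn: "\<forall>x\<in>P. 0 \<le> f x" and fsum: "sum f P = 1"
    and fchain: "\<forall>x\<in>P. \<forall>y\<in>P. f x \<noteq> 0 \<longrightarrow> f y \<noteq> 0 \<longrightarrow> comparable le x y"
    and fsupp: "\<forall>x\<in>P - S. f x = 0"
    using f by (auto simp: chain_weights_def)
  have "sum ?g P = ?g p + (?g q + sum ?g (P - {p} - {q}))"
    using P pqP pq by (simp add: sum.remove[of P p] sum.remove[of "P - {p}" q])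
  also have "sum ?g (P - {p} - {q}) = sum f (P - {p} - {q})"
    by (rule sum.cong) (auto simp: shift_weight_def)
  also have "?g p + (?g q + sum f (P - {p} - {q})) = f p + (f q + sum f (P - {p} - {q}))"
    using pq by (simp add: shift_weight_def algebra_simps)
  also have "\<dots> = sum f P"
    using P pqP pq by (simp add: sum.remove[of P p] sum.remove[of "P - {p}" q])
  finally have gsum: "sum ?g P = 1" using fsum by simp
  have gsupp: "x \<in> S \<and> (f x \<noteq> 0 \<or> (x = q \<and> f p \<noteq> 0))" if "x \<in> P" "?g x \<noteq> 0" for x
    using that fsupp pq by (auto simp: shift_weight_def split: if_splits)
  have comparable_q: "comparable le x q" if "x \<in> S" "f x \<noteq> 0" "f p \<noteq> 0" for x
    using that fchain pqP S dom by (auto simp: dominates_def)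
  have "comparable le x y" if "x \<in> P" "y \<in> P" "?g x \<noteq> 0" "?g y \<noteq> 0" for x y
    using gsupp[OF that(1,3)] gsupp[OF that(2,4)] fchain that comparable_q refl pqP
    by (auto simp: comparable_def)
  moreover have "?g \<in> topspace (powertop_real P)"
    using ftop pqP by (auto simp: shift_weight_def PiE_def extensional_def)
  moreover have "\<forall>x\<in>P. 0 \<le> ?g x"
    using fnn t pqP by (auto simp: shift_weight_def)
  moreover have "\<forall>x\<in>P - S. ?g x = 0"
    using fsupp pq by (auto simp: shift_weight_def)
  ultimately show ?thesis using gsum by (simp add: chain_weights_def)
qed

text \<open>Dismantlability of the comparability graph (strong collapsibility of the order complex).\<close>

inductive dismantlable :: "('a \<Rightarrow> 'a \<Rightarrow> bool) \<Rightarrow> 'a set \<Rightarrow> bool" for le where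
  singleton: "dismantlable le {m}"
| insert_dominated: "dismantlable le S \<Longrightarrow> q \<in> S \<Longrightarrow> p \<notin> S \<Longrightarrow> dominates le (insert p S) q p \<Longrightarrow>
    dismantlable le (insert p S)"

lemma dismantlable_nonempty: "dismantlable le S \<Longrightarrow> S \<noteq> {}"
  by (induction rule: dismantlable.induct) auto

lemma contractible_space_chain_weights:
  assumes P: "finite P" and refl: "\<forall>x\<in>P. le x x"
  shows "dismantlable le S \<Longrightarrow> S \<subseteq> P \<Longrightarrow>
    contractible_space (subtopology (powertop_real P) (chain_weights P le S))"
proof (induction rule: dismantlable.induct)
  case (singleton m)
  then show ?case
    using chain_weights_singleton[OF P]
    by (intro contractible_space_subset_singleton) auto
next
  case (insert_dominated S q p)
  let ?X = "subtopology (powertop_real P) (chain_weights P le (insert p S))"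
  let ?Y = "subtopology (powertop_real P) (chain_weights P le S)"
  let ?r = "\<lambda>f. shift_weight p q (1, f)"
  have pqP: "p \<in> P" "q \<in> P" using insert_dominated by auto
  have stays: "shift_weight p q (t, f) \<in> chain_weights P le (insert p S)"
    if "f \<in> chain_weights P le (insert p S)" "t \<in> {0..1}" for f t
    using shift_weight_in_chain_weights[where le = le and S = "insert p S", OF P refl]
      insert_dominated that by auto
  have H: "continuous_map (prod_topology (top_of_set {0..1}) ?X) ?X (shift_weight p q)"
    using stays by (intro continuous_map_into_subtopology continuous_map_shift_weight pqP) auto
  then have "homotopic_with (\<lambda>_. True) ?X ?X id ?r"
    unfolding homotopic_with_def by (intro exI[of _ "shift_weight p q"]) auto
  then have deform: "homotopic_with (\<lambda>_. True) ?X ?X (id \<circ> ?r) id"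
    by (simp add: homotopic_with_sym)
  have "continuous_map ?X ?X ?r"
    using continuous_map_compose[OF continuous_map_pairedI[of ?X _ "\<lambda>_. 1" _ id] H]
    by (simp add: o_def)
  moreover have "?r \<in> topspace ?X \<rightarrow> chain_weights P le S"
    using stays insert_dominated pqP
    by (auto simp: chain_weights_insert[of p P S] shift_weight_def)
  ultimately have "continuous_map ?X ?Y ?r"
    by (simp add: continuous_map_in_subtopology)
  moreover have "continuous_map ?Y ?X id"
    using chain_weights_mono[OF subset_insertI, of P le S p]
    by (intro continuous_map_into_subtopology) auto
  moreover have "?r f = f" if "f \<in> topspace ?Y" for f
    using that insert_dominated pqP
    by (intro shift_weight_1_fixed) (auto simp: chain_weights_insert[of p P S])
  ultimately have "retraction_maps ?X ?Y ?r id"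
    by (simp add: retraction_maps_def)
  then have "?X homotopy_equivalent_space ?Y"
    using deform deformation_retraction_imp_homotopy_equivalent_space by blast
  then show ?case
    using insert_dominated homotopy_equivalent_space_contractibility by blast
qed

lemma dismantlable_imp_weakly_contractible:
  assumes "finite P" "\<forall>x\<in>P. le x x" "dismantlable le P"
  shows "weakly_contractible_poset P le"
  using assms contractible_space_chain_weights[OF assms(1,2,3)] dismantlable_nonempty
  by (simp add: weakly_contractible_poset_def poset_realization_eq_chain_weights)

lemma dismantlable_Un_dominated:
  assumes "finite R" "dismantlable le S" "q \<in> S" "S \<inter> R = {}"
    and "\<And>p. p \<in> R \<Longrightarrow> dominates le (S \<union> R) q p"
  shows "dismantlable le (S \<union> R)"
  using assms(1,4,5)
proof (induction R rule: finite_induct)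
  case empty
  then show ?case using assms(2) by simp
next
  case (insert p R)
  have "dismantlable le (S \<union> R)"
    using insert.prems dominates_mono[of le "S \<union> insert p R" q _ "S \<union> R"]
    by (intro insert.IH) blast+
  then have "dismantlable le (insert p (S \<union> R))"
    by (rule dismantlable.insert_dominated[where q = q]) (use insert assms(3) in auto)
  then show ?case by simp
qed

lemma dismantlable_cone:
  assumes "finite S" "m \<in> S" "\<forall>x\<in>S. comparable le x m"
  shows "dismantlable le S"
proof -
  have "dismantlable le ({m} \<union> (S - {m}))"
    using assms
    by (intro dismantlable_Un_dominated dismantlable.singleton) (auto simp: dominates_def)
  then show ?thesis using assms(2) by (simp add: insert_absorb)
qed

lemma weakly_contractible_poset_least:
  assumes "finite P" "\<forall>x\<in>P. le x x" "m \<in> P" "\<forall>x\<in>P. le m x"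
  shows "weakly_contractible_poset P le"
  using assms
  by (intro dismantlable_imp_weakly_contractible dismantlable_cone) (auto simp: comparable_def)

section \<open>Cells of a globular sum\<close>

definition glued_to_prev :: "nat list \<Rightarrow> nat \<Rightarrow> nat \<Rightarrow> gkind \<Rightarrow> bool" where
  "glued_to_prev ms i k b \<longleftrightarrow>
     i < length ms \<and> ((k < ms ! i \<and> b \<noteq> Top) \<or> (k = ms ! i \<and> b = Src))"

text \<open>The representative of a cell of the globular sum lying in the globe of least index.\<close>

fun canonical_cell :: "nat list \<Rightarrow> rawcell \<Rightarrow> rawcell" where
  "canonical_cell ms (0, k, b) = (0, k, b)"
| "canonical_cell ms (Suc i, k, b) =
     (if glued_to_prev ms i k b then canonical_cell ms (i, k, if k = ms ! i then Tgt else b)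
      else (Suc i, k, b))"

lemma canonical_cell_dim: "fst (snd (canonical_cell ms c)) = fst (snd c)"
  by (induction ms c rule: canonical_cell.induct) auto

lemma canonical_cell_globe_le: "fst (canonical_cell ms c) \<le> fst c"
  by (induction ms c rule: canonical_cell.induct) (auto simp: le_Suc_eq)

lemma canonical_cell_Top: "snd (snd c) = Top \<Longrightarrow> canonical_cell ms c = c"
  by (induction ms c rule: canonical_cell.induct) (auto simp: glued_to_prev_def)

lemma canonical_cell_not_Top: "snd (snd c) \<noteq> Top \<Longrightarrow> snd (snd (canonical_cell ms c)) \<noteq> Top"
  by (induction ms c rule: canonical_cell.induct) auto

lemma canonical_cell_boundary:
  "l < fst (snd c) \<Longrightarrow> e \<noteq> Top \<Longrightarrow>
     canonical_cell ms (fst c, l, e) = canonical_cell ms (fst (canonical_cell ms c), l, e)"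
proof (induction ms c rule: canonical_cell.induct)
  case (2 ms i k b)
  show ?case
  proof (cases "glued_to_prev ms i k b")
    case True
    then have "glued_to_prev ms i l e" "l < ms ! i"
      using "2.prems" by (auto simp: glued_to_prev_def)
    then show ?thesis using 2 True by simp
  qed simp
qed simp

abbreviation glue_equiv :: "nat list \<Rightarrow> (rawcell \<times> rawcell) set" where
  "glue_equiv ms \<equiv> (glue ms \<union> (glue ms)\<inverse>)\<^sup>*"

lemma glue_equiv_canonical_cell: "(c, canonical_cell ms c) \<in> glue_equiv ms"
proof (induction ms c rule: canonical_cell.induct)
  case (2 ms i k b)
  show ?case
  proof (cases "glued_to_prev ms i k b")
    case True
    let ?b = "if k = ms ! i then Tgt else b"
    have "((i, k, ?b), (Suc i, k, b)) \<in> glue ms"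
      using True by (auto simp: glue_def glued_to_prev_def)
    then have "((Suc i, k, b), (i, k, ?b)) \<in> glue_equiv ms" by blast
    with "2.IH"[OF True] show ?thesis using True by (metis canonical_cell.simps(2) rtrancl_trans)
  qed simp
qed simp

lemma canonical_cell_glue: "(c, d) \<in> glue ms \<Longrightarrow> canonical_cell ms c = canonical_cell ms d"
  by (auto simp: glue_def glued_to_prev_def)

lemma glue_equiv_iff_canonical_cell:
  "(c, d) \<in> glue_equiv ms \<longleftrightarrow> canonical_cell ms c = canonical_cell ms d"
proof
  assume "(c, d) \<in> glue_equiv ms"
  then show "canonical_cell ms c = canonical_cell ms d"
  proof (induction rule: rtrancl_induct)
    case (step y z)
    have "canonical_cell ms y = canonical_cell ms z"
      using step.hyps(2) canonical_cell_glue[of y z ms] canonical_cell_glue[of z y ms] by auto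
    then show ?case using step.IH by simp
  qed simp
next
  assume eq: "canonical_cell ms c = canonical_cell ms d"
  have "(canonical_cell ms d, d) \<in> glue_equiv ms"
    using rtrancl_converseI[OF glue_equiv_canonical_cell[of d ms]]
    by (simp add: converse_Un Un_commute rtrancl_converse)
  with glue_equiv_canonical_cell[of c ms] show "(c, d) \<in> glue_equiv ms"
    using eq by (metis rtrancl_trans)
qed

lemma cell_equiv_iff:
  "(c, d) \<in> cell_equiv ns ms \<longleftrightarrow>
     c \<in> raw_cells ns \<and> d \<in> raw_cells ns \<and> canonical_cell ms c = canonical_cell ms d"
  by (auto simp: cell_equiv_def glue_equiv_iff_canonical_cell)

definition cell_class :: "nat list \<Rightarrow> nat list \<Rightarrow> rawcell \<Rightarrow> rawcell set" where
  "cell_class ns ms c = {d \<in> raw_cells ns. canonical_cell ms d = canonical_cell ms c}"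

lemma mem_cell_class:
  "d \<in> cell_class ns ms c \<longleftrightarrow> d \<in> raw_cells ns \<and> canonical_cell ms d = canonical_cell ms c"
  by (simp add: cell_class_def)

lemma gcells_eq_image_cell_class: "gcells ns ms = cell_class ns ms ` raw_cells ns"
proof -
  have "cell_equiv ns ms `` {c} = cell_class ns ms c" if "c \<in> raw_cells ns" for c
    using that by (auto simp: cell_equiv_iff cell_class_def)
  then show ?thesis unfolding gcells_def quotient_def by auto
qed

lemma gcells_eq_cell_class: "X \<in> gcells ns ms \<Longrightarrow> c \<in> X \<Longrightarrow> X = cell_class ns ms c"
  by (auto simp: gcells_eq_image_cell_class cell_class_def)

lemma gcells_subset_raw_cells: "X \<in> gcells ns ms \<Longrightarrow> X \<subseteq> raw_cells ns"
  by (auto simp: gcells_eq_image_cell_class cell_class_def)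

lemma gcells_nonempty: "X \<in> gcells ns ms \<Longrightarrow> \<exists>c. c \<in> X"
  by (auto simp: gcells_eq_image_cell_class cell_class_def)

lemma gcells_dim_eq: "X \<in> gcells ns ms \<Longrightarrow> (i, k, b) \<in> X \<Longrightarrow> (i', k', b') \<in> X \<Longrightarrow> k = k'"
  using canonical_cell_dim[of ms "(i, k, b)"] canonical_cell_dim[of ms "(i', k', b')"]
  by (auto simp: gcells_eq_image_cell_class cell_class_def)

lemma finite_raw_cells: "finite (raw_cells ns)"
proof -
  have "raw_cells ns \<subseteq> {..<length ns} \<times> {..Max (set ns)} \<times> UNIV"
    by (auto simp: raw_cells_def globe_cell_def)
       (metis Max_ge finite_set le_trans less_imp_le nth_mem)+
  moreover have "(UNIV :: gkind set) = {Src, Tgt, Top}"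
    using gkind.exhaust by auto
  ultimately show ?thesis
    by (metis finite.emptyI finite_insert finite_SigmaI finite_atMost finite_lessThan finite_subset)
qed

lemma finite_gcells: "finite (gcells ns ms)"
  by (simp add: gcells_eq_image_cell_class finite_raw_cells)

lemma face_stepI:
  "X \<in> gcells ns ms \<Longrightarrow> Y \<in> gcells ns ms \<Longrightarrow> (i, l, e) \<in> X \<Longrightarrow> (i, k, b) \<in> Y \<Longrightarrow> l < k \<Longrightarrow>
     (X, Y) \<in> face_step ns ms"
  unfolding face_step_def by blast

lemma face_step_in_globe:
  assumes XY: "(X, Y) \<in> face_step ns ms" and y: "(j, k, b) \<in> Y"
  shows "\<exists>l e. l < k \<and> (j, l, e) \<in> X"
proof -
  obtain i l e k0 b0 where x: "(i, l, e) \<in> X" and y0: "(i, k0, b0) \<in> Y" and "l < k0"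
    and gX: "X \<in> gcells ns ms" and gY: "Y \<in> gcells ns ms"
    using XY unfolding face_step_def by blast
  have "k0 = k" using gcells_dim_eq[OF gY y0 y] .
  with \<open>l < k0\<close> have lk: "l < k" by simp
  have raw: "(i, l, e) \<in> raw_cells ns" "(i, k0, b0) \<in> raw_cells ns" "(j, k, b) \<in> raw_cells ns"
    using x y0 y gX gY gcells_subset_raw_cells by blast+
  then have e: "e \<noteq> Top" and je: "(j, l, e) \<in> raw_cells ns"
    using \<open>l < k0\<close> lk by (auto simp: raw_cells_def globe_cell_def)
  have same: "canonical_cell ms (i, k0, b0) = canonical_cell ms (j, k, b)"
    using gcells_eq_cell_class[OF gY y0] y by (simp add: mem_cell_class)
  have "canonical_cell ms (j, l, e) = canonical_cell ms (i, l, e)"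
    using canonical_cell_boundary[of l "(i, k0, b0)" e ms]
      canonical_cell_boundary[of l "(j, k, b)" e ms] \<open>l < k0\<close> lk e same by simp
  then have "(j, l, e) \<in> X"
    using gcells_eq_cell_class[OF gX x] je by (simp add: mem_cell_class)
  with lk show ?thesis by blast
qed

lemma trans_face_step: "trans (face_step ns ms)"
proof (rule transI)
  fix X Y Z assume XY: "(X, Y) \<in> face_step ns ms" and YZ: "(Y, Z) \<in> face_step ns ms"
  obtain i k b k' b' where "(i, k, b) \<in> Y" "(i, k', b') \<in> Z" "k < k'" "Z \<in> gcells ns ms"
    using YZ unfolding face_step_def by blast
  moreover obtain l e where "l < k" "(i, l, e) \<in> X"
    using face_step_in_globe[OF XY \<open>(i, k, b) \<in> Y\<close>] by blast
  moreover have "X \<in> gcells ns ms" using XY unfolding face_step_def by blast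
  ultimately show "(X, Z) \<in> face_step ns ms"
    by (meson face_stepI less_trans)
qed

lemma el_le_iff:
  "el_le ns ms X Y \<longleftrightarrow> X \<in> gcells ns ms \<and> Y \<in> gcells ns ms \<and> (X = Y \<or> (X, Y) \<in> face_step ns ms)"
  unfolding el_le_def rtrancl_eq_or_trancl trancl_id[OF trans_face_step]
  by (auto simp: face_step_def)

lemma el_le_refl: "X \<in> gcells ns ms \<Longrightarrow> el_le ns ms X X"
  by (simp add: el_le_iff)

lemma top_cell_in_gcells:
  assumes "j < length ns"
  shows "{(j, ns ! j, Top)} \<in> gcells ns ms"
proof -
  have top: "canonical_cell ms (j, ns ! j, Top) = (j, ns ! j, Top)"
    by (simp add: canonical_cell_Top)
  have "d = (j, ns ! j, Top)" if "canonical_cell ms d = canonical_cell ms (j, ns ! j, Top)" for d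
  proof (cases "snd (snd d) = Top")
    case True
    then show ?thesis using that top canonical_cell_Top[of d ms] by simp
  next
    case False
    then show ?thesis using that top canonical_cell_not_Top[of d ms] by simp
  qed
  moreover have "(j, ns ! j, Top) \<in> raw_cells ns"
    using assms by (simp add: raw_cells_def globe_cell_def)
  ultimately have "cell_class ns ms (j, ns ! j, Top) = {(j, ns ! j, Top)}"
    by (auto simp: cell_class_def)
  with \<open>(j, ns ! j, Top) \<in> raw_cells ns\<close> show ?thesis
    unfolding gcells_eq_image_cell_class by (metis imageI)
qed

lemma el_le_top_cell:
  assumes X: "X \<in> gcells ns ms" and c: "(j, k, b) \<in> X"
  shows "el_le ns ms X {(j, ns ! j, Top)}"
proof -
  have raw: "(j, k, b) \<in> raw_cells ns" using X c gcells_subset_raw_cells by blast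
  then have top: "{(j, ns ! j, Top)} \<in> gcells ns ms"
    by (simp add: raw_cells_def top_cell_in_gcells)
  show ?thesis
  proof (cases "k < ns ! j")
    case True
    then show ?thesis using face_stepI[OF X top c] top X by (simp add: el_le_iff)
  next
    case False
    then have "(j, k, b) = (j, ns ! j, Top)" using raw by (auto simp: raw_cells_def globe_cell_def)
    then have "X = {(j, ns ! j, Top)}"
      using gcells_eq_cell_class[OF X c] gcells_eq_cell_class[OF top, of "(j, ns ! j, Top)"] by simp
    then show ?thesis using el_le_refl[OF X] by simp
  qed
qed

section \<open>Contractibility of the category of elements\<close>

definition cells_upto :: "nat list \<Rightarrow> nat list \<Rightarrow> nat \<Rightarrow> rawcell set set" where
  "cells_upto ns ms j = {X \<in> gcells ns ms. \<exists>c\<in>X. fst c \<le> j}"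

lemma finite_cells_upto: "finite (cells_upto ns ms j)"
  using finite_gcells[of ns ms] by (simp add: cells_upto_def)

lemma cells_upto_mono: "i \<le> j \<Longrightarrow> cells_upto ns ms i \<subseteq> cells_upto ns ms j"
  by (force simp: cells_upto_def)

lemma dismantlable_cells_upto_0:
  assumes "ns \<noteq> []"
  shows "dismantlable (el_le ns ms) (cells_upto ns ms 0)"
proof (rule dismantlable_cone[OF finite_cells_upto])
  show "{(0, ns ! 0, Top)} \<in> cells_upto ns ms 0"
    using assms top_cell_in_gcells[of 0 ns ms] by (simp add: cells_upto_def)
  show "\<forall>X\<in>cells_upto ns ms 0. comparable (el_le ns ms) X {(0, ns ! 0, Top)}"
    using el_le_top_cell by (fastforce simp: cells_upto_def comparable_def)
qed

lemma glued_cell: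
  assumes "glob_pres ns ms" "Suc j < length ns"
  shows "cell_class ns ms (j, ms ! j, Tgt) \<in> cells_upto ns ms j"
    and "(Suc j, ms ! j, Src) \<in> cell_class ns ms (j, ms ! j, Tgt)"
proof -
  have "j < length ms" "ms ! j < ns ! j" "ms ! j < ns ! Suc j"
    using assms by (auto simp: glob_pres_def)
  then have raw: "(j, ms ! j, Tgt) \<in> raw_cells ns"
    using assms(2) by (simp add: raw_cells_def globe_cell_def)
  then show "cell_class ns ms (j, ms ! j, Tgt) \<in> cells_upto ns ms j"
    by (force simp: cells_upto_def gcells_eq_image_cell_class mem_cell_class)
  show "(Suc j, ms ! j, Src) \<in> cell_class ns ms (j, ms ! j, Tgt)"
    using \<open>j < length ms\<close> \<open>ms ! j < ns ! Suc j\<close> assms(2)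
    by (simp add: mem_cell_class raw_cells_def globe_cell_def glued_to_prev_def)
qed

text \<open>A cell meeting the globes \<open>0, \<dots>, j\<close> can reach the top cell of globe \<open>j + 1\<close> only
  through the boundary \<open>D_{m_j}\<close> along which that globe is glued.\<close>

lemma el_le_glued_cell:
  assumes gp: "glob_pres ns ms" and j: "Suc j < length ns" and X: "X \<in> cells_upto ns ms j"
    and XT: "(X, {(Suc j, ns ! Suc j, Top)}) \<in> face_step ns ms"
  shows "el_le ns ms X (cell_class ns ms (j, ms ! j, Tgt))"
proof -
  let ?Q = "cell_class ns ms (j, ms ! j, Tgt)"
  obtain i k b where c: "(i, k, b) \<in> X" "i \<le> j" and gX: "X \<in> gcells ns ms"
    using X by (auto simp: cells_upto_def)
  have Q: "?Q \<in> gcells ns ms" "(Suc j, ms ! j, Src) \<in> ?Q"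
    using glued_cell[OF gp j] by (auto simp: cells_upto_def)
  obtain l e where le: "(Suc j, l, e) \<in> X"
    using face_step_in_globe[OF XT] by auto
  have same: "canonical_cell ms (Suc j, l, e) = canonical_cell ms (i, k, b)"
    using gcells_eq_cell_class[OF gX c(1)] le by (simp add: mem_cell_class)
  have "glued_to_prev ms j l e"
  proof (rule ccontr)
    assume "\<not> glued_to_prev ms j l e"
    then have "fst (canonical_cell ms (i, k, b)) = Suc j"
      using same by (metis canonical_cell.simps(2) fst_conv)
    then show False using canonical_cell_globe_le[of ms "(i, k, b)"] c(2) by simp
  qed
  then consider "l < ms ! j" | "l = ms ! j" "e = Src"
    by (auto simp: glued_to_prev_def)
  then show ?thesis
  proof cases
    case 1
    then show ?thesis using face_stepI[OF gX Q(1) le Q(2)] gX Q by (simp add: el_le_iff)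
  next
    case 2
    then have "X = ?Q"
      using gcells_eq_cell_class[OF gX le] gcells_eq_cell_class[OF Q(1,2)] by simp
    then show ?thesis using el_le_refl[OF gX] by simp
  qed
qed

lemma dominates_top_cell_by_glued_cell:
  assumes gp: "glob_pres ns ms" and j: "Suc j < length ns"
  defines "T \<equiv> {(Suc j, ns ! Suc j, Top)}" and "Q \<equiv> cell_class ns ms (j, ms ! j, Tgt)"
  shows "dominates (el_le ns ms) (insert T (cells_upto ns ms j)) Q T"
  unfolding dominates_def
proof (intro ballI impI)
  have "ms ! j < ns ! Suc j" using gp j by (auto simp: glob_pres_def)
  have Q: "Q \<in> gcells ns ms" "(Suc j, ms ! j, Src) \<in> Q"
    using glued_cell[OF gp j] by (auto simp: Q_def cells_upto_def)
  have T: "T \<in> gcells ns ms" using top_cell_in_gcells[OF j] by (simp add: T_def)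
  have "(Q, T) \<in> face_step ns ms"
    using face_stepI[OF Q(1) T Q(2)] \<open>ms ! j < ns ! Suc j\<close> by (simp add: T_def)
  then have QT: "el_le ns ms Q T" using Q T by (simp add: el_le_iff)
  fix X assume X: "X \<in> insert T (cells_upto ns ms j)" and XT: "comparable (el_le ns ms) X T"
  show "comparable (el_le ns ms) X Q"
  proof (cases "X = T")
    case True
    then show ?thesis using QT by (simp add: comparable_def)
  next
    case False
    then have X_old: "X \<in> cells_upto ns ms j" using X by simp
    then obtain i k b where "(i, k, b) \<in> X" "i \<le> j"
      by (auto simp: cells_upto_def)
    then have "(T, X) \<notin> face_step ns ms"
      using face_step_in_globe[of T X ns ms i k b] by (auto simp: T_def)
    then have "(X, T) \<in> face_step ns ms"
      using XT False by (auto simp: comparable_def el_le_iff)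
    then show ?thesis
      using el_le_glued_cell[OF gp j X_old] by (simp add: T_def Q_def comparable_def)
  qed
qed

lemma dominates_by_top_cell:
  assumes p: "p \<in> cells_upto ns ms (Suc j)" "p \<notin> cells_upto ns ms j"
  shows "dominates (el_le ns ms) (cells_upto ns ms (Suc j)) {(Suc j, ns ! Suc j, Top)} p"
  unfolding dominates_def
proof (intro ballI impI)
  let ?T = "{(Suc j, ns ! Suc j, Top)}"
  obtain l e where pc: "(Suc j, l, e) \<in> p" and p_cell: "p \<in> gcells ns ms"
    using p by (auto simp: cells_upto_def le_Suc_eq)
  have p_late: "Suc j \<le> i" if "(i, k, b) \<in> p" for i k b
    using p that by (force simp: cells_upto_def)
  fix X assume "X \<in> cells_upto ns ms (Suc j)" and Xp: "comparable (el_le ns ms) X p"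
  then obtain i k b where c: "(i, k, b) \<in> X" "i \<le> Suc j" and gX: "X \<in> gcells ns ms"
    by (auto simp: cells_upto_def)
  consider "X = p" | "(X, p) \<in> face_step ns ms" | "(p, X) \<in> face_step ns ms"
    using Xp by (auto simp: comparable_def el_le_iff)
  then have "el_le ns ms X ?T"
  proof cases
    case 1
    then show ?thesis using el_le_top_cell[OF p_cell pc] by simp
  next
    case 2
    then obtain l' e' where "(Suc j, l', e') \<in> X" using face_step_in_globe[OF _ pc] by blast
    then show ?thesis using el_le_top_cell[OF gX] by blast
  next
    case 3
    then obtain l' e' where "(i, l', e') \<in> p" using face_step_in_globe[OF _ c(1)] by blast
    then have "i = Suc j" using p_late c(2) by fastforce
    then show ?thesis using el_le_top_cell[OF gX] c(1) by blast
  qed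
  then show "comparable (el_le ns ms) X ?T" by (simp add: comparable_def)
qed

lemma dismantlable_cells_upto_Suc:
  assumes gp: "glob_pres ns ms" and j: "Suc j < length ns"
    and IH: "dismantlable (el_le ns ms) (cells_upto ns ms j)"
  shows "dismantlable (el_le ns ms) (cells_upto ns ms (Suc j))"
proof -
  let ?le = "el_le ns ms" and ?S = "cells_upto ns ms j" and ?T = "{(Suc j, ns ! Suc j, Top)}"
  define R where "R = cells_upto ns ms (Suc j) - insert ?T ?S"
  have T_new: "?T \<notin> ?S" by (auto simp: cells_upto_def)
  have A: "dismantlable ?le (insert ?T ?S)"
    using IH glued_cell(1)[OF gp j] T_new dominates_top_cell_by_glued_cell[OF gp j]
    by (rule dismantlable.insert_dominated)
  have "?T \<in> cells_upto ns ms (Suc j)"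
    using top_cell_in_gcells[OF j, of ms] by (simp add: cells_upto_def)
  moreover have "?S \<subseteq> cells_upto ns ms (Suc j)" by (simp add: cells_upto_mono)
  ultimately have split: "cells_upto ns ms (Suc j) = insert ?T ?S \<union> R"
    unfolding R_def by blast
  have "dismantlable ?le (insert ?T ?S \<union> R)"
  proof (rule dismantlable_Un_dominated[OF _ A])
    show "finite R" using finite_cells_upto by (simp add: R_def)
    show "\<And>p. p \<in> R \<Longrightarrow> dominates ?le (insert ?T ?S \<union> R) ?T p"
      unfolding split[symmetric] using dominates_by_top_cell by (simp add: R_def)
  qed (auto simp: R_def)
  then show ?thesis using split by simp
qed

lemma dismantlable_cells_upto:
  assumes "glob_pres ns ms"
  shows "j < length ns \<Longrightarrow> dismantlable (el_le ns ms) (cells_upto ns ms j)"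
proof (induction j)
  case 0
  then show ?case using dismantlable_cells_upto_0 by auto
next
  case (Suc j)
  then show ?case using dismantlable_cells_upto_Suc[OF assms] by simp
qed

lemma weakly_contractible_gcells:
  assumes "glob_pres ns ms"
  shows "weakly_contractible_poset (gcells ns ms) (el_le ns ms)"
proof -
  have "length ns - 1 < length ns" using assms by (simp add: glob_pres_def)
  moreover have "cells_upto ns ms (length ns - 1) = gcells ns ms"
  proof -
    have "\<exists>c\<in>X. fst c \<le> length ns - 1" if X: "X \<in> gcells ns ms" for X
    proof -
      obtain c where "c \<in> X" using gcells_nonempty[OF X] by blast
      moreover have "fst c \<le> length ns - 1"
        using gcells_subset_raw_cells[OF X] \<open>c \<in> X\<close> by (auto simp: raw_cells_def)
      ultimately show ?thesis by blast
    qed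
    then show ?thesis by (auto simp: cells_upto_def)
  qed
  ultimately have "dismantlable (el_le ns ms) (gcells ns ms)"
    using dismantlable_cells_upto[OF assms] by metis
  then show ?thesis
    using dismantlable_imp_weakly_contractible[OF finite_gcells] el_le_refl by blast
qed

section \<open>Suspension\<close>

lemma canonical_cell_susp:
  "canonical_cell (susp_pres ms) (susp_raw c) = susp_raw (canonical_cell ms c)"
proof -
  have "canonical_cell (map Suc ms) (i, Suc k, b) = susp_raw (canonical_cell ms (i, k, b))"
    for i k b
  proof (induction i arbitrary: k b)
    case (Suc i)
    have "glued_to_prev (map Suc ms) i (Suc k) b = glued_to_prev ms i k b"
      by (auto simp: glued_to_prev_def)
    then show ?case using Suc by (auto simp: susp_raw_def glued_to_prev_def)
  qed (simp add: susp_raw_def)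
  then show ?thesis by (cases c) (simp add: susp_pres_def susp_raw_def)
qed

text \<open>\<open>\<Xi> T\<close> has only two vertices: its \<open>0\<close>-cells are identified across all globes.\<close>

lemma canonical_cell_susp_vertex:
  "b \<noteq> Top \<Longrightarrow> i \<le> length ms \<Longrightarrow> canonical_cell (susp_pres ms) (i, 0, b) = (0, 0, b)"
  by (induction i) (auto simp: susp_pres_def glued_to_prev_def)

lemma susp_raw_in_raw_cells: "susp_raw c \<in> raw_cells (susp_pres ns) \<longleftrightarrow> c \<in> raw_cells ns"
  by (cases c) (auto simp: raw_cells_def susp_pres_def susp_raw_def globe_cell_def)

lemma inj_susp_raw: "inj susp_raw"
  by (rule injI) (auto simp: susp_raw_def split: prod.splits)

lemma susp_el_cell_class:
  assumes c: "c \<in> raw_cells ns"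
  shows "susp_el ns ms (cell_class ns ms c) = cell_class (susp_pres ns) (susp_pres ms) (susp_raw c)"
proof (rule set_eqI)
  fix d
  have "d \<in> susp_el ns ms (cell_class ns ms c) \<longleftrightarrow> d \<in> raw_cells (susp_pres ns) \<and>
      (\<exists>c'\<in>cell_class ns ms c. canonical_cell (susp_pres ms) d = susp_raw (canonical_cell ms c'))"
    unfolding susp_el_def Image_iff image_iff
    by (fastforce simp: cell_equiv_iff canonical_cell_susp susp_raw_in_raw_cells mem_cell_class)
  also have "\<dots> \<longleftrightarrow> d \<in> cell_class (susp_pres ns) (susp_pres ms) (susp_raw c)"
  proof -
    have "c \<in> cell_class ns ms c"
      and "\<forall>c'\<in>cell_class ns ms c. canonical_cell ms c' = canonical_cell ms c"
      using c by (simp_all add: mem_cell_class)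
    then show ?thesis
      unfolding mem_cell_class[of d] canonical_cell_susp susp_raw_in_raw_cells
      using c by (smt (verit))
  qed
  finally show "d \<in> susp_el ns ms (cell_class ns ms c) \<longleftrightarrow> \<dots>" .
qed

lemma susp_el_in_gcells:
  assumes "X \<in> gcells ns ms"
  shows "susp_el ns ms X \<in> gcells (susp_pres ns) (susp_pres ms)"
proof -
  obtain c where "c \<in> raw_cells ns" "X = cell_class ns ms c"
    using assms by (auto simp: gcells_eq_image_cell_class)
  then show ?thesis
    by (simp add: susp_el_cell_class gcells_eq_image_cell_class susp_raw_in_raw_cells)
qed

lemma susp_raw_in_susp_el:
  assumes "X \<in> gcells ns ms"
  shows "susp_raw c \<in> susp_el ns ms X \<longleftrightarrow> c \<in> X"
proof -
  obtain c0 where c0: "c0 \<in> raw_cells ns" "X = cell_class ns ms c0"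
    using assms by (auto simp: gcells_eq_image_cell_class)
  then show ?thesis
    by (auto simp: susp_el_cell_class mem_cell_class canonical_cell_susp susp_raw_in_raw_cells
        inj_eq[OF inj_susp_raw])
qed

lemma el_le_susp_vertex:
  assumes gp: "glob_pres ns ms" and v: "(j, 0, b) \<in> raw_cells (susp_pres ns)"
    and X: "X \<in> gcells ns ms"
  shows "el_le (susp_pres ns) (susp_pres ms)
           (cell_class (susp_pres ns) (susp_pres ms) (j, 0, b)) (susp_el ns ms X)"
proof -
  let ?V = "cell_class (susp_pres ns) (susp_pres ms) (j, 0, b)"
  have len: "length ns = Suc (length ms)" using gp by (simp add: glob_pres_def)
  obtain i k b' where c: "(i, k, b') \<in> X" using gcells_nonempty[OF X] by (metis prod_cases3)
  have "i < length ns" using gcells_subset_raw_cells[OF X] c by (auto simp: raw_cells_def)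
  moreover have "j < length ns" "b \<noteq> Top"
    using v by (auto simp: raw_cells_def susp_pres_def globe_cell_def)
  ultimately have "(i, 0, b) \<in> ?V"
    using len by (simp add: mem_cell_class canonical_cell_susp_vertex)
      (simp add: raw_cells_def susp_pres_def globe_cell_def)
  moreover have "(i, Suc k, b') \<in> susp_el ns ms X"
    using susp_raw_in_susp_el[OF X, of "(i, k, b')"] c by (simp add: susp_raw_def)
  moreover have "?V \<in> gcells (susp_pres ns) (susp_pres ms)"
    using v by (simp add: gcells_eq_image_cell_class)
  ultimately show ?thesis
    using face_stepI[of ?V _ _ "susp_el ns ms X"] susp_el_in_gcells[OF X] by (auto simp: el_le_iff)
qed

lemma el_le_susp_elD:
  assumes X0: "X0 \<in> gcells ns ms" and X: "X \<in> gcells ns ms"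
    and le: "el_le (susp_pres ns) (susp_pres ms) (susp_el ns ms X0) (susp_el ns ms X)"
  shows "el_le ns ms X0 X"
proof -
  obtain j k b where c0: "(j, k, b) \<in> X0" using gcells_nonempty[OF X0] by (metis prod_cases3)
  obtain i k' b' where c: "(i, k', b') \<in> X" using gcells_nonempty[OF X] by (metis prod_cases3)
  have mem: "(i, Suc l, e) \<in> susp_el ns ms Y \<longleftrightarrow> (i, l, e) \<in> Y" if "Y \<in> gcells ns ms" for Y i l e
    using susp_raw_in_susp_el[OF that, of "(i, l, e)"] by (simp add: susp_raw_def)
  consider "susp_el ns ms X0 = susp_el ns ms X"
    | "(susp_el ns ms X0, susp_el ns ms X) \<in> face_step (susp_pres ns) (susp_pres ms)"
    using le by (auto simp: el_le_iff)
  then show ?thesis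
  proof cases
    case 1
    then have "(j, k, b) \<in> X" using mem[OF X0] mem[OF X] c0 by metis
    then show ?thesis using gcells_eq_cell_class X0 X c0 el_le_refl by metis
  next
    case 2
    then obtain l e where "l < Suc k'" and face: "(i, l, e) \<in> susp_el ns ms X0"
      using face_step_in_globe mem[OF X] c by blast
    have "l = Suc k"
      using gcells_dim_eq[OF susp_el_in_gcells[OF X0] face] mem[OF X0] c0 by blast
    then have "(i, k, e) \<in> X0" "k < k'" using face mem[OF X0] \<open>l < Suc k'\<close> by auto
    then show ?thesis using face_stepI[OF X0 X _ c] X0 X by (auto simp: el_le_iff)
  qed
qed

lemma susp_el_surj_positive_dim:
  assumes "(j, Suc k, b) \<in> raw_cells (susp_pres ns)"
  shows "cell_class (susp_pres ns) (susp_pres ms) (j, Suc k, b) =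
           susp_el ns ms (cell_class ns ms (j, k, b))"
    and "cell_class ns ms (j, k, b) \<in> gcells ns ms"
proof -
  have "(j, k, b) \<in> raw_cells ns"
    using assms susp_raw_in_raw_cells[of "(j, k, b)"] by (simp add: susp_raw_def)
  then show "cell_class (susp_pres ns) (susp_pres ms) (j, Suc k, b) =
      susp_el ns ms (cell_class ns ms (j, k, b))" and "cell_class ns ms (j, k, b) \<in> gcells ns ms"
    by (simp_all add: gcells_eq_image_cell_class susp_el_cell_class susp_raw_def)
qed

theorem mainTheorem5:
  assumes "glob_pres ns ms"
  shows "final_poset_functor
           (gcells ns ms) (el_le ns ms)
           (gcells (susp_pres ns) (susp_pres ms)) (el_le (susp_pres ns) (susp_pres ms))
           (susp_el ns ms)"
  unfolding final_poset_functor_def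
proof
  let ?ns = "susp_pres ns" and ?ms = "susp_pres ms"
  fix Y assume "Y \<in> gcells ?ns ?ms"
  then obtain j k b where raw: "(j, k, b) \<in> raw_cells ?ns" and Y: "Y = cell_class ?ns ?ms (j, k, b)"
    by (auto simp: gcells_eq_image_cell_class)
  let ?comma = "{X \<in> gcells ns ms. el_le ?ns ?ms Y (susp_el ns ms X)}"
  show "weakly_contractible_poset ?comma (el_le ns ms)"
  proof (cases k)
    case 0
    then have "?comma = gcells ns ms"
      using el_le_susp_vertex[OF assms] raw Y by auto
    then show ?thesis using weakly_contractible_gcells[OF assms] by simp
  next
    case (Suc k')
    let ?X0 = "cell_class ns ms (j, k', b)"
    have X0: "?X0 \<in> gcells ns ms" and "Y = susp_el ns ms ?X0"
      using susp_el_surj_positive_dim[of j k' b ns ms] raw Y Suc by simp_all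
    then show ?thesis
      using el_le_susp_elD[OF X0] el_le_refl susp_el_in_gcells
      by (intro weakly_contractible_poset_least[of _ _ ?X0]) (auto simp: finite_gcells)
  qed
qed

end
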